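(* Let $\mathcal{H}$ be a real Hilbert space, let $A_i:\mathcal{H}\rightrightarrows\mathcal{H}$ be operators for $i=1,\ldots,r$, and let $\beta\in{]0,1[}$. Then \[ \operatorname{zer}\left(\sum_{i=1}^rA_i^{(\beta)}\right)=\beta J_{\frac{1}{r(1-\beta)}\sum_{i=1}^rA_i}(0). \] Therefore, $\operatorname{zer}\left(\sum_{i=1}^rA_i^{(\beta)}\right)\neq\emptyset$ if and only if $0\in\operatorname{ran}\left(\operatorname{Id}+\frac{1}{r(1-\beta)}\sum_{i=1}^rA_i\right)$.
   Context: The resolvent of an operator $T$ is $J_T:=(\operatorname{Id}+T)^{-1}$, i.e. $J_T(x)=\{y:x\in y+T(y)\}$ (a set). The $\beta$-strengthening of $A$ is $A^{(\beta)}(x):=\left(A+(1-\beta)\operatorname{Id}\right)\left(\frac{x}{\beta}\right)$. $\operatorname{zer}T=\{x:0\in T(x)\}$; $\operatorname{ran}$ denotes the range. *)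

theory Defs
  imports "HOL-Analysis.Analysis"
begin

definition op_sum :: "(nat \<Rightarrow> 'a \<Rightarrow> 'a::real_vector set) \<Rightarrow> nat \<Rightarrow> 'a \<Rightarrow> 'a set" where
  "op_sum A r x = {(\<Sum>i=1..r. y i) | y. \<forall>i\<in>{1..r}. y i \<in> A i x}"

definition op_scale :: "real \<Rightarrow> ('a \<Rightarrow> 'a::real_vector set) \<Rightarrow> 'a \<Rightarrow> 'a set" where
  "op_scale c T x = (\<lambda>v. c *\<^sub>R v) ` T x"

definition op_add :: "('a \<Rightarrow> 'a::real_vector set) \<Rightarrow> ('a \<Rightarrow> 'a set) \<Rightarrow> 'a \<Rightarrow> 'a set" where
  "op_add S T x = {u + v | u v. u \<in> S x \<and> v \<in> T x}"

definition op_id :: "'a \<Rightarrow> 'a set" where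
  "op_id x = {x}"

definition resolvent :: "('a \<Rightarrow> 'a::real_vector set) \<Rightarrow> 'a \<Rightarrow> 'a set" where
  "resolvent T x = {y. x \<in> op_add op_id T y}"

definition strengthening :: "real \<Rightarrow> ('a \<Rightarrow> 'a::real_vector set) \<Rightarrow> 'a \<Rightarrow> 'a set" where
  "strengthening \<beta> A x = op_add A (op_scale (1 - \<beta>) op_id) ((1 / \<beta>) *\<^sub>R x)"

definition zer :: "('a \<Rightarrow> 'a::real_vector set) \<Rightarrow> 'a set" where
  "zer T = {x. 0 \<in> T x}"

definition ran :: "('a \<Rightarrow> 'b set) \<Rightarrow> 'b set" where
  "ran T = (\<Union>x. T x)"

end

theory Submission
  imports Defs
begin

text \<open>Summing the strengthenings collects the identity parts: the sum of the
  \<open>A\<^sub>i\<^sup>(\<^sup>\<beta>\<^sup>)\<close> at \<open>x\<close> is \<open>(\<Sum> A\<^sub>i + r(1-\<beta>) Id)(x/\<beta>)\<close>.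
  Dividing \<open>0 \<in> S y + r(1-\<beta>) y\<close> by \<open>r(1-\<beta>)\<close> says exactly that \<open>y\<close> lies in the
  resolvent of \<open>S/(r(1-\<beta>))\<close> at \<open>0\<close>, and \<open>x = \<beta> y\<close>.\<close>

lemma op_add_scaled_id_iff:
  "w \<in> op_add T (op_scale c op_id) x \<longleftrightarrow> (\<exists>t\<in>T x. w = t + c *\<^sub>R x)"
  unfolding op_add_def op_scale_def op_id_def by auto

lemma op_sum_op_add_scaled_id:
  fixes A :: "nat \<Rightarrow> 'a::real_vector \<Rightarrow> 'a set"
  shows "op_sum (\<lambda>i. op_add (A i) (op_scale c op_id)) r x
           = op_add (op_sum A r) (op_scale (real r * c) op_id) x"
proof (rule set_eqI)
  fix w
  have shift: "(\<Sum>i=1..r. a i + c *\<^sub>R x) = (\<Sum>i=1..r. a i) + (real r * c) *\<^sub>R x"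
    for a :: "nat \<Rightarrow> 'a"
    by (simp add: sum.distrib sum_constant_scaleR)
  show "w \<in> op_sum (\<lambda>i. op_add (A i) (op_scale c op_id)) r x
          \<longleftrightarrow> w \<in> op_add (op_sum A r) (op_scale (real r * c) op_id) x"
  proof
    assume "w \<in> op_sum (\<lambda>i. op_add (A i) (op_scale c op_id)) r x"
    then obtain y where w: "w = (\<Sum>i=1..r. y i)"
      and y: "\<forall>i\<in>{1..r}. \<exists>t\<in>A i x. y i = t + c *\<^sub>R x"
      unfolding op_sum_def op_add_scaled_id_iff by auto
    then obtain a where a: "\<forall>i\<in>{1..r}. a i \<in> A i x \<and> y i = a i + c *\<^sub>R x"
      by metis
    have "w = (\<Sum>i=1..r. a i) + (real r * c) *\<^sub>R x"
      unfolding w shift[symmetric] using a by (auto intro: sum.cong)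
    moreover have "(\<Sum>i=1..r. a i) \<in> op_sum A r x"
      using a unfolding op_sum_def by blast
    ultimately show "w \<in> op_add (op_sum A r) (op_scale (real r * c) op_id) x"
      unfolding op_add_scaled_id_iff by blast
  next
    assume "w \<in> op_add (op_sum A r) (op_scale (real r * c) op_id) x"
    then obtain a where a: "\<forall>i\<in>{1..r}. a i \<in> A i x"
      and w: "w = (\<Sum>i=1..r. a i + c *\<^sub>R x)"
      unfolding op_add_scaled_id_iff op_sum_def shift by blast
    have "\<forall>i\<in>{1..r}. a i + c *\<^sub>R x \<in> op_add (A i) (op_scale c op_id) x"
      using a unfolding op_add_scaled_id_iff by blast
    with w show "w \<in> op_sum (\<lambda>i. op_add (A i) (op_scale c op_id)) r x"
      unfolding op_sum_def by blast
  qed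
qed

lemma zero_in_op_add_scaled_id_iff_resolvent:
  assumes "c \<noteq> 0"
  shows "0 \<in> op_add T (op_scale c op_id) y \<longleftrightarrow> y \<in> resolvent (op_scale (1 / c) T) 0"
proof -
  have "t + c *\<^sub>R y = 0 \<longleftrightarrow> y + (1 / c) *\<^sub>R t = 0" for t
  proof -
    have "t + c *\<^sub>R y = 0 \<longleftrightarrow> (1 / c) *\<^sub>R (t + c *\<^sub>R y) = 0"
      using assms by simp
    also have "(1 / c) *\<^sub>R (t + c *\<^sub>R y) = y + (1 / c) *\<^sub>R t"
      using assms by (simp add: scaleR_add_right add.commute)
    finally show ?thesis .
  qed
  then show ?thesis
    unfolding op_add_scaled_id_iff resolvent_def op_add_def op_scale_def op_id_def
    by (auto simp: eq_commute[of 0])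
qed

lemma resolvent_nonempty_iff: "resolvent T x \<noteq> {} \<longleftrightarrow> x \<in> ran (op_add op_id T)"
  unfolding resolvent_def ran_def by auto

lemma preimage_scaleR_inverse_eq_image:
  fixes S :: "'a::real_vector set"
  assumes "\<beta> \<noteq> 0"
  shows "{x. (1 / \<beta>) *\<^sub>R x \<in> S} = (\<lambda>v. \<beta> *\<^sub>R v) ` S"
  using assms by (force simp: image_iff)

theorem proposition4p5:
  fixes A :: "nat \<Rightarrow> 'a::{real_inner, complete_space} \<Rightarrow> 'a set"
    and r :: nat and \<beta> :: real
  assumes "r \<ge> 1" and "0 < \<beta>" and "\<beta> < 1"
  shows "zer (op_sum (\<lambda>i. strengthening \<beta> (A i)) r)
           = (\<lambda>v. \<beta> *\<^sub>R v) ` resolvent (op_scale (1 / (real r * (1 - \<beta>))) (op_sum A r)) 0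
    \<and> (zer (op_sum (\<lambda>i. strengthening \<beta> (A i)) r) \<noteq> {}
           \<longleftrightarrow> 0 \<in> ran (op_add op_id (op_scale (1 / (real r * (1 - \<beta>))) (op_sum A r))))"
proof -
  let ?J = "resolvent (op_scale (1 / (real r * (1 - \<beta>))) (op_sum A r)) 0"
  have "op_sum (\<lambda>i. strengthening \<beta> (A i)) r x
          = op_sum (\<lambda>i. op_add (A i) (op_scale (1 - \<beta>) op_id)) r ((1 / \<beta>) *\<^sub>R x)" for x
    unfolding op_sum_def strengthening_def ..
  then have "op_sum (\<lambda>i. strengthening \<beta> (A i)) r x
          = op_add (op_sum A r) (op_scale (real r * (1 - \<beta>)) op_id) ((1 / \<beta>) *\<^sub>R x)" for x
    by (simp add: op_sum_op_add_scaled_id)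
  moreover have "real r * (1 - \<beta>) \<noteq> 0"
    using assms by simp
  ultimately have "zer (op_sum (\<lambda>i. strengthening \<beta> (A i)) r) = {x. (1 / \<beta>) *\<^sub>R x \<in> ?J}"
    unfolding zer_def by (simp add: zero_in_op_add_scaled_id_iff_resolvent)
  also have "\<dots> = (\<lambda>v. \<beta> *\<^sub>R v) ` ?J"
    using assms by (simp add: preimage_scaleR_inverse_eq_image)
  finally show ?thesis
    using resolvent_nonempty_iff by blast
qed

end
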